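(* Let $n\ge 1$ be an integer, $X\sim \mathrm{Bino}(n,p)$ with $p\in[0,1]$, and fix $\alpha\in[0,1]$. Let $T_p:\{0,1,\dots,n\}\times[0,1]\to\mathbb{R}$ be a test statistic satisfying $$T_p(x,p_0)=T_p(n-x,1-p_0)\quad\text{for all } x\in\{0,\dots,n\},\ p_0\in[0,1].$$ Define $$h_p(x,p_0)=\sum_{\{y\in\{0,\dots,n\}:\,T_p(y,p_0)\le T_p(x,p_0)\}} p_B(y,n,p_0),$$ and $C_p(x)=\overline{\{p_0\in[0,1]: h_p(x,p_0)>\alpha\}}$, written $C_p(x)=[L_p(x),U_p(x)]$. Then $$U_p(x)=1-L_p(n-x)\quad\text{for all } x\in\{0,\dots,n\}.$$
   Context: $p_B(y,n,p)=\binom{n}{y}p^y(1-p)^{n-y}$ denotes the binomial probability mass function. For a set $A\subseteq\mathbb{R}$, $\overline{A}$ denotes the smallest closed simply connected set (i.e. closed interval) containing $A$. A small value of $T_p(x,p_0)$ is regarded as evidence against $H_0:p=p_0$; $C_p$ is the resulting confidence interval for $p$ of nominal level $1-\alpha$. *)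

theory Defs
  imports "HOL-Analysis.Analysis"
begin

definition pB :: "nat \<Rightarrow> nat \<Rightarrow> real \<Rightarrow> real" where
  "pB y n p = real (n choose y) * p ^ y * (1 - p) ^ (n - y)"

definition h_p :: "(nat \<Rightarrow> real \<Rightarrow> real) \<Rightarrow> nat \<Rightarrow> nat \<Rightarrow> real \<Rightarrow> real" where
  "h_p T n x p0 = (\<Sum>y\<in>{y\<in>{0..n}. T y p0 \<le> T x p0}. pB y n p0)"

text \<open>Smallest closed simply connected set (closed interval) containing A \<subseteq> R.\<close>
definition interval_hull :: "real set \<Rightarrow> real set" where
  "interval_hull A = closure (convex hull A)"

definition C_p :: "(nat \<Rightarrow> real \<Rightarrow> real) \<Rightarrow> nat \<Rightarrow> real \<Rightarrow> nat \<Rightarrow> real set" where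
  "C_p T n \<alpha> x = interval_hull {p0 \<in> {0..1}. h_p T n x p0 > \<alpha>}"

definition L_p :: "(nat \<Rightarrow> real \<Rightarrow> real) \<Rightarrow> nat \<Rightarrow> real \<Rightarrow> nat \<Rightarrow> real" where
  "L_p T n \<alpha> x = Inf (C_p T n \<alpha> x)"

definition U_p :: "(nat \<Rightarrow> real \<Rightarrow> real) \<Rightarrow> nat \<Rightarrow> real \<Rightarrow> nat \<Rightarrow> real" where
  "U_p T n \<alpha> x = Sup (C_p T n \<alpha> x)"

end

theory Submission
  imports Defs
begin

text \<open>The reflection \<open>(y, p) \<mapsto> (n - y, 1 - p)\<close> preserves the binomial probabilities and, by
  the symmetry of the statistic, the ordering of its values; hence it maps the set of
  \<open>p\<^sub>0\<close> with \<open>h\<^sub>p(x, p\<^sub>0) > \<alpha>\<close> onto the corresponding set for \<open>n - x\<close>. Taking closed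
  interval hulls commutes with the reflection \<open>p \<mapsto> 1 - p\<close>, which exchanges upper and
  lower endpoints.\<close>

lemma interval_hull_reflect:
  "interval_hull ((\<lambda>p. a - p) ` A) = (\<lambda>p::real. a - p) ` interval_hull A"
proof -
  have reflect: "(\<lambda>p::real. a - p) ` B = (+) a ` (uminus ` B)" for B
    by (auto simp: image_image)
  have "closure (convex hull ((+) a ` uminus ` A)) = (+) a ` closure (uminus ` (convex hull A))"
    by (simp add: convex_hull_translation closure_translation convex_hull_linear_image[OF linear_uminus])
  also have "\<dots> = (+) a ` uminus ` closure (convex hull A)"
    by (simp add: closure_injective_linear_image[OF linear_uminus inj_uminus])
  finally show ?thesis
    unfolding interval_hull_def reflect .
qed

lemma bounded_interval_hull: "bounded A \<Longrightarrow> bounded (interval_hull A)"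
  unfolding interval_hull_def by (intro bounded_closure bounded_convex_hull)

lemma cInf_reflect:
  fixes C :: "real set"
  assumes "bdd_above C" "C \<noteq> {}"
  shows "Inf ((\<lambda>p. a - p) ` C) = a - Sup C"
  using Inf_add_eq[of uminus C a] uminus_cSUP[of "\<lambda>p. p" C] assms
  by simp

lemma pB_reflect: "y \<le> n \<Longrightarrow> pB (n - y) n (1 - p) = pB y n p"
  by (simp add: pB_def binomial_symmetric[symmetric])

lemma h_p_reflect:
  assumes "x \<le> n" and T_sym: "\<And>y. y \<le> n \<Longrightarrow> T y (1 - p) = T (n - y) p"
  shows "h_p T n (n - x) (1 - p) = h_p T n x p"
proof -
  have pB_sym: "pB y n (1 - p) = pB (n - y) n p" if "y \<le> n" for y
    using pB_reflect[of "n - y" n p] that by simp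
  have "h_p T n (n - x) (1 - p) = (\<Sum>y\<in>{y\<in>{0..n}. T (n - y) p \<le> T x p}. pB (n - y) n p)"
    unfolding h_p_def T_sym[OF diff_le_self] using \<open>x \<le> n\<close>
    by (intro sum.cong) (auto simp: T_sym pB_sym)
  also have "\<dots> = (\<Sum>y\<in>{y\<in>{0..n}. T y p \<le> T x p}. pB y n p)"
    by (rule sum.reindex_bij_witness[of _ "\<lambda>y. n - y" "\<lambda>y. n - y"]) auto
  finally show ?thesis
    unfolding h_p_def .
qed

lemma C_p_reflect:
  assumes "x \<le> n" and T_sym: "\<And>y p. y \<le> n \<Longrightarrow> p \<in> {0..1} \<Longrightarrow> T y p = T (n - y) (1 - p)"
  shows "C_p T n \<alpha> (n - x) = (\<lambda>p. 1 - p) ` C_p T n \<alpha> x"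
proof -
  have h_sym: "h_p T n (n - x) (1 - p) = h_p T n x p" if "p \<in> {0..1}" for p
  proof (rule h_p_reflect[OF \<open>x \<le> n\<close>])
    show "T y (1 - p) = T (n - y) p" if "y \<le> n" for y
      using T_sym[of y "1 - p"] \<open>y \<le> n\<close> \<open>p \<in> {0..1}\<close> by simp
  qed
  have "{p \<in> {0..1}. h_p T n (n - x) p > \<alpha>} = (\<lambda>p. 1 - p) ` {p \<in> {0..1}. h_p T n x p > \<alpha>}"
  proof (intro set_eqI iffI)
    fix q assume "q \<in> {p \<in> {0..1}. h_p T n (n - x) p > \<alpha>}"
    then show "q \<in> (\<lambda>p. 1 - p) ` {p \<in> {0..1}. h_p T n x p > \<alpha>}"
      using h_sym[of "1 - q"] by (intro image_eqI[of _ _ "1 - q"]) auto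
  qed (use h_sym in auto)
  then show ?thesis
    unfolding C_p_def by (simp add: interval_hull_reflect)
qed

theorem proposition1:
  fixes T :: "nat \<Rightarrow> real \<Rightarrow> real" and n :: nat and \<alpha> :: real and x :: nat
  assumes "n \<ge> 1"
    and "\<alpha> \<in> {0..1}"
    and "\<And>y p0. y \<le> n \<Longrightarrow> p0 \<in> {0..1} \<Longrightarrow> T y p0 = T (n - y) (1 - p0)"
    and "x \<le> n"
    and "C_p T n \<alpha> x \<noteq> {}"
  shows "U_p T n \<alpha> x = 1 - L_p T n \<alpha> (n - x)"
proof -
  have "bounded (C_p T n \<alpha> x)"
    unfolding C_p_def
    by (rule bounded_interval_hull) (auto intro: bounded_subset[OF bounded_closed_interval])
  moreover have "C_p T n \<alpha> (n - x) = (\<lambda>p. 1 - p) ` C_p T n \<alpha> x"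
    using assms(4,3) by (rule C_p_reflect)
  ultimately have "L_p T n \<alpha> (n - x) = 1 - U_p T n \<alpha> x"
    unfolding L_p_def U_p_def by (simp add: cInf_reflect bounded_imp_bdd_above assms(5))
  then show ?thesis
    by simp
qed

end
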